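(* Let $\mathbb K$ be a commutative semiring with $0\ne1$ and let $S:\mathrm{NW}(\Delta)\to K$ be a regular nested word series. Then $\pi(S):\Delta^*\to K$ is an algebraic formal power series.
   Context: Nested words: $\Delta$ finite alphabet. A nesting relation of width $n$ is a relation $\nu$ on $[n]$ with: $\nu(i,j)\Rightarrow i<j$; $\nu(i,j),\nu(i,j')\Rightarrow j=j'$ and $\nu(i,j),\nu(i',j)\Rightarrow i=i'$; $\nu(i,j),\nu(i',j'),i<i'\Rightarrow j<i'$ or $j'<j$. A nested word is $(w,\nu)$, $w=a_1\cdots a_n\in\Delta^+$, $\nu$ of width $n$; $\mathrm{NW}(\Delta)$ is their set. If $\nu(i,j)$, $i$ is a call and $j$ a return position; others are internal. WNWA over $\mathbb K$: $\mathcal A=(Q,\iota,\delta_{call},\delta_{int},\delta_{ret},\kappa)$, $Q$ finite, $\delta_{call},\delta_{int}:Q\times\Delta\times Q\to K$, $\delta_{ret}:Q\times Q\times\Delta\times Q\to K$, $\iota,\kappa:Q\to K$. A run on $(a_1\cdots a_n,\nu)$ is $(q_0,\dots,q_n)$; weight at $j$: $\delta_{call}(q_{j-1},a_j,q_j)$ for a call $j$, $\delta_{int}(q_{j-1},a_j,q_j)$ for internal $j$, $\delta_{ret}(q_{j-1},q_{i-1},a_j,q_j)$ if $\nu(i,j)$; run weight is the product. $\|\mathcal A\|(nw)=\sum_{(q_0..q_n)}\iota(q_0)\mathrm{wt}\,\kappa(q_n)$. A series is regular if it equals some $\|\mathcal A\|$. Projection: $\pi(w,\nu)=w$ and $\pi(S)(w)=\sum_{nw\in\mathrm{NW}(\Delta),\,\pi(nw)=w}S(nw)$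 for $w\in\Delta^*$ (so $\pi(S)(\varepsilon)=0$). Algebraic series: a formal power series is a map $\Delta^*\to K$; $\varepsilon$ is the empty word; sums and scalar multiples are pointwise and the Cauchy product is $(S_1S_2)(w)=\sum_{w=w_1w_2}S_1(w_1)S_2(w_2)$; a word $u$ is identified with its characteristic series. Let $\mathcal X$ be a finite set of variables disjoint from $\Delta$. A polynomial is a map $P:(\Delta\cup\mathcal X)^*\to K$ with finite support. An algebraic system is a family $(P_X)_{X\in\mathcal X}$ of polynomials; a solution is a family $(S_X)_{X\in\mathcal X}$ of series $\Delta^*\to K$ with $S_X=\sum (P_X,u_1X_1\cdots u_kX_ku_{k+1})\,u_1S_{X_1}\cdots u_kS_{X_k}u_{k+1}$, summing over all $u_1X_1\cdots u_kX_ku_{k+1}$ in the support of $P_X$ ($u_j\in\Delta^*$, $X_j\in\mathcal X$). The system is proper if $P_X(Y)=P_X(\varepsilon)=0$ for all $X,Y\in\mathcal X$; a series $S$ is quasiregular if $S(\varepsilon)=0$. A proper system has exactly one quasiregular solution. A series is algebraic if it is a component $S_X$ of the quasiregular solution of a proper algebraic system. *)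

theory Defs
  imports Main
begin

text \<open>Positions are 1-based: a word w has positions 1..length w, and letter
 a_j is w ! (j - 1).\<close>

definition nesting_rel :: "nat \<Rightarrow> (nat \<times> nat) set \<Rightarrow> bool" where
  "nesting_rel n \<nu> \<longleftrightarrow>
     \<nu> \<subseteq> {1..n} \<times> {1..n} \<and>
     (\<forall>i j. (i, j) \<in> \<nu> \<longrightarrow> i < j) \<and>
     (\<forall>i j j'. (i, j) \<in> \<nu> \<longrightarrow> (i, j') \<in> \<nu> \<longrightarrow> j = j') \<and>
     (\<forall>i i' j. (i, j) \<in> \<nu> \<longrightarrow> (i', j) \<in> \<nu> \<longrightarrow> i = i') \<and>
     (\<forall>i j i' j'. (i, j) \<in> \<nu> \<longrightarrow> (i', j') \<in> \<nu> \<longrightarrow> i < i' \<longrightarrow> j < i' \<or> j' < j)"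

type_synonym 'a nested_word = "'a list \<times> (nat \<times> nat) set"

definition NW :: "'a nested_word set" where
  "NW = {(w, \<nu>). w \<noteq> [] \<and> nesting_rel (length w) \<nu>}"

text \<open>States are natural numbers drawn from a finite set Q (any finite state set
 can be renamed into such a set).\<close>

record ('a, 'k) wnwa =
  states :: "nat set"
  init :: "nat \<Rightarrow> 'k"
  dcall :: "nat \<Rightarrow> 'a \<Rightarrow> nat \<Rightarrow> 'k"
  dint :: "nat \<Rightarrow> 'a \<Rightarrow> nat \<Rightarrow> 'k"
  dret :: "nat \<Rightarrow> nat \<Rightarrow> 'a \<Rightarrow> nat \<Rightarrow> 'k"
  final :: "nat \<Rightarrow> 'k"

definition wnwa_ok :: "('a, 'k) wnwa \<Rightarrow> bool" where
  "wnwa_ok A \<longleftrightarrow> finite (states A)"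

definition step_weight ::
  "('a, 'k) wnwa \<Rightarrow> 'a nested_word \<Rightarrow> nat list \<Rightarrow> nat \<Rightarrow> 'k" where
  "step_weight A nw qs j =
     (let w = fst nw; \<nu> = snd nw in
      if \<exists>i. (i, j) \<in> \<nu> then
        dret A (qs ! (j - 1)) (qs ! ((THE i. (i, j) \<in> \<nu>) - 1)) (w ! (j - 1)) (qs ! j)
      else if \<exists>j'. (j, j') \<in> \<nu> then dcall A (qs ! (j - 1)) (w ! (j - 1)) (qs ! j)
      else dint A (qs ! (j - 1)) (w ! (j - 1)) (qs ! j))"

definition runs :: "('a, 'k) wnwa \<Rightarrow> nat \<Rightarrow> nat list set" where
  "runs A n = {qs. length qs = Suc n \<and> set qs \<subseteq> states A}"

definition behaviour :: "('a, 'k::comm_semiring_1) wnwa \<Rightarrow> 'a nested_word \<Rightarrow> 'k" where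
  "behaviour A nw =
     (\<Sum>qs\<in>runs A (length (fst nw)).
        init A (qs ! 0) * (\<Prod>j\<in>{1..length (fst nw)}. step_weight A nw qs j)
          * final A (qs ! length (fst nw)))"

definition regular_nw :: "('a nested_word \<Rightarrow> 'k::comm_semiring_1) \<Rightarrow> bool" where
  "regular_nw S \<longleftrightarrow> (\<exists>A. wnwa_ok A \<and> (\<forall>nw\<in>NW. S nw = behaviour A nw))"

definition proj :: "('a nested_word \<Rightarrow> 'k::comm_semiring_1) \<Rightarrow> 'a list \<Rightarrow> 'k" where
  "proj S w = (if w = [] then 0
               else (\<Sum>\<nu>\<in>{\<nu>. nesting_rel (length w) \<nu>}. S (w, \<nu>)))"

definition cauchy_prod :: "('a list \<Rightarrow> 'k::comm_semiring_1) \<Rightarrow> ('a list \<Rightarrow> 'k) \<Rightarrow> 'a list \<Rightarrow> 'k" where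
  "cauchy_prod S1 S2 w = (\<Sum>p\<in>{(u, v). u @ v = w}. S1 (fst p) * S2 (snd p))"

definition char_series :: "'a list \<Rightarrow> 'a list \<Rightarrow> 'k::comm_semiring_1" where
  "char_series u w = (if w = u then 1 else 0)"

text \<open>Letters of polynomials: Inl a for a terminal a, Inr X for a variable X.\<close>
fun eval_mon :: "(nat \<Rightarrow> 'a list \<Rightarrow> 'k::comm_semiring_1) \<Rightarrow> ('a + nat) list \<Rightarrow> 'a list \<Rightarrow> 'k" where
  "eval_mon S [] = char_series []"
| "eval_mon S (Inl a # m) = cauchy_prod (char_series [a]) (eval_mon S m)"
| "eval_mon S (Inr X # m) = cauchy_prod (S X) (eval_mon S m)"

definition supp :: "(('a + nat) list \<Rightarrow> 'k::zero) \<Rightarrow> ('a + nat) list set" where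
  "supp P = {m. P m \<noteq> 0}"

definition polynomial_over :: "nat set \<Rightarrow> (('a + nat) list \<Rightarrow> 'k::zero) \<Rightarrow> bool" where
  "polynomial_over V P \<longleftrightarrow> finite (supp P) \<and>
     (\<forall>m\<in>supp P. \<forall>X. Inr X \<in> set m \<longrightarrow> X \<in> V)"

definition proper_system :: "nat set \<Rightarrow> (nat \<Rightarrow> ('a + nat) list \<Rightarrow> 'k::zero) \<Rightarrow> bool" where
  "proper_system V P \<longleftrightarrow> (\<forall>X\<in>V. P X [] = 0 \<and> (\<forall>Y\<in>V. P X [Inr Y] = 0))"

definition is_solution ::
  "nat set \<Rightarrow> (nat \<Rightarrow> ('a + nat) list \<Rightarrow> 'k::comm_semiring_1) \<Rightarrow> (nat \<Rightarrow> 'a list \<Rightarrow> 'k) \<Rightarrow> bool" where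
  "is_solution V P S \<longleftrightarrow>
     (\<forall>X\<in>V. \<forall>w. S X w = (\<Sum>m\<in>supp (P X). P X m * eval_mon S m w))"

definition quasiregular :: "('a list \<Rightarrow> 'k::zero) \<Rightarrow> bool" where
  "quasiregular T \<longleftrightarrow> T [] = 0"

definition algebraic :: "('a list \<Rightarrow> 'k::comm_semiring_1) \<Rightarrow> bool" where
  "algebraic T \<longleftrightarrow>
     (\<exists>V P X0 S. finite V \<and> X0 \<in> V \<and> (\<forall>X\<in>V. polynomial_over V (P X)) \<and>
        proper_system V P \<and> is_solution V P S \<and> (\<forall>X\<in>V. quasiregular (S X)) \<and>
        S X0 = T)"

end

theory Submission
  imports Defs "HOL-Library.Nat_Bijection"
begin

text \<open>
  For states \<open>p\<close> and \<open>q\<close> let \<open>W(p,q)\<close> be the series whose coefficient at \<open>w\<close> is the total weight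
  of the runs from \<open>p\<close> to \<open>q\<close> on all nested words with underlying word \<open>w\<close>; on nonempty words
  \<open>\<pi>(S) = \<Sum>_{p,q} \<iota>(p) W(p,q) \<kappa>(q)\<close>. A nesting relation on \<open>a w\<close> either leaves the first position
  internal or matches it with a later return, which cuts \<open>w = u b v\<close> into the enclosed part \<open>u\<close>
  and the remainder \<open>v\<close>. Hence \<open>W(p,q)(\<epsilon>) = [p = q]\<close> and
  \<open>W(p,q)(a w) = \<Sum>_r \<delta>_int(p,a,r) W(r,q)(w) +
     \<Sum>_{r,s,t} \<Sum>_{w = u b v} \<delta>_call(p,a,r) W(r,s)(u) \<delta>_ret(s,p,b,t) W(t,q)(v)\<close>. Writing
  \<open>W(p,q) = [p = q] + X(p,q)\<close> with \<open>X(p,q)\<close> quasiregular turns these identities into a proper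
  algebraic system in the variables \<open>X(p,q)\<close>, of which \<open>\<pi>(S)\<close> is one more component.
\<close>

section \<open>Cauchy products\<close>

lemma cauchy_prod_conv_take_drop:
  "cauchy_prod S T w = (\<Sum>k\<le>length w. S (take k w) * T (drop k w))"
  unfolding cauchy_prod_def
  by (rule sum.reindex_bij_witness[where j="\<lambda>p. length (fst p)" and i="\<lambda>k. (take k w, drop k w)"])
     auto

lemma cauchy_prod_letter_Nil [simp]: "cauchy_prod (char_series [a]) T [] = 0"
  by (simp add: cauchy_prod_conv_take_drop char_series_def)

lemma cauchy_prod_letter_Cons [simp]:
  "cauchy_prod (char_series [a]) T (x # w) = (if x = a then T w else 0)"
proof -
  have "cauchy_prod (char_series [a]) T (x # w) =
      (\<Sum>k\<le>Suc (length w). if k = 1 then (if x = a then T w else 0) else 0)"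
    unfolding cauchy_prod_conv_take_drop
    by (intro sum.cong refl) (auto simp: char_series_def take_Cons' drop_Cons')
  then show ?thesis by (subst (asm) sum.delta) auto
qed

lemma cauchy_prod_unit_left [simp]: "cauchy_prod (char_series []) T = T"
proof
  fix w
  have "cauchy_prod (char_series []) T w = (\<Sum>k\<le>length w. if k = 0 then T w else 0)"
    unfolding cauchy_prod_conv_take_drop by (intro sum.cong) (auto simp: char_series_def)
  then show "cauchy_prod (char_series []) T w = T w" by simp
qed

lemma cauchy_prod_unit_right [simp]: "cauchy_prod T (char_series []) = T"
proof
  fix w
  have "cauchy_prod T (char_series []) w = (\<Sum>k\<le>length w. if k = length w then T w else 0)"
    unfolding cauchy_prod_conv_take_drop by (intro sum.cong) (auto simp: char_series_def)
  then show "cauchy_prod T (char_series []) w = T w" by simp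
qed

lemma cauchy_prod_letter_middle:
  "cauchy_prod S (cauchy_prod (char_series [b]) T) w =
     (\<Sum>k<length w. if w ! k = b then S (take k w) * T (drop (Suc k) w) else 0)"
proof -
  have "cauchy_prod S (cauchy_prod (char_series [b]) T) w =
     (\<Sum>k\<le>length w. if k < length w \<and> w ! k = b then S (take k w) * T (drop (Suc k) w) else 0)"
    unfolding cauchy_prod_conv_take_drop[of S]
  proof (intro sum.cong refl)
    fix k
    show "S (take k w) * cauchy_prod (char_series [b]) T (drop k w) =
        (if k < length w \<and> w ! k = b then S (take k w) * T (drop (Suc k) w) else 0)"
      by (cases "k < length w") (auto simp: Cons_nth_drop_Suc[symmetric])
  qed
  also have "\<dots> = (\<Sum>k<length w. if w ! k = b then S (take k w) * T (drop (Suc k) w) else 0)"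
    by (simp add: lessThan_Suc_atMost[symmetric])
  finally show ?thesis .
qed

lemma cauchy_prod_sum_left:
  "cauchy_prod (\<lambda>u. \<Sum>i\<in>I. c i * F i u) T w = (\<Sum>i\<in>I. c i * cauchy_prod (F i) T w)"
  unfolding cauchy_prod_conv_take_drop
  by (simp add: sum_distrib_left sum_distrib_right mult.assoc sum.swap[of _ I])

lemma cauchy_prod_sum_right:
  "cauchy_prod S (\<lambda>u. \<Sum>i\<in>I. c i * F i u) w = (\<Sum>i\<in>I. c i * cauchy_prod S (F i) w)"
  unfolding cauchy_prod_conv_take_drop
  by (simp add: sum_distrib_left sum_distrib_right mult.assoc mult.left_commute sum.swap[of _ I])

lemma cauchy_prod_sum_sum:
  "cauchy_prod (\<lambda>u. \<Sum>i\<in>I. c i * F i u) (cauchy_prod B (\<lambda>u. \<Sum>j\<in>J. d j * G j u)) w =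
    (\<Sum>i\<in>I. \<Sum>j\<in>J. c i * d j * cauchy_prod (F i) (cauchy_prod B (G j)) w)"
proof -
  have "cauchy_prod B (\<lambda>u. \<Sum>j\<in>J. d j * G j u) = (\<lambda>v. \<Sum>j\<in>J. d j * cauchy_prod B (G j) v)"
    by (rule ext, rule cauchy_prod_sum_right)
  then show ?thesis
    by (simp add: cauchy_prod_sum_left cauchy_prod_sum_right sum_distrib_left mult.assoc)
qed

lemma sum_letters_cauchy_prod:
  fixes c :: "'a::finite \<Rightarrow> 'k::comm_semiring_1"
  shows "(\<Sum>b\<in>UNIV. c b * cauchy_prod S (cauchy_prod (char_series [b]) T) w) =
    (\<Sum>k<length w. S (take k w) * c (w ! k) * T (drop (Suc k) w))"
proof -
  have "(\<Sum>b\<in>UNIV. c b * cauchy_prod S (cauchy_prod (char_series [b]) T) w) =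
      (\<Sum>b\<in>UNIV. \<Sum>k<length w. if w ! k = b then S (take k w) * c b * T (drop (Suc k) w) else 0)"
    by (auto simp: cauchy_prod_letter_middle sum_distrib_left ac_simps intro!: sum.cong)
  also have "\<dots> = (\<Sum>k<length w. \<Sum>b\<in>UNIV. if w ! k = b then S (take k w) * c b * T (drop (Suc k) w) else 0)"
    by (rule sum.swap)
  finally show ?thesis by simp
qed

section \<open>Nesting relations\<close>

definition nesting_rels :: "nat \<Rightarrow> (nat \<times> nat) set set" where
  "nesting_rels n = {\<nu>. nesting_rel n \<nu>}"

definition shift_arcs :: "nat \<Rightarrow> (nat \<times> nat) set \<Rightarrow> (nat \<times> nat) set" where
  "shift_arcs c \<nu> = {(i, j). c \<le> i \<and> c \<le> j \<and> (i - c, j - c) \<in> \<nu>}"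

definition window_arcs :: "nat \<Rightarrow> nat \<Rightarrow> (nat \<times> nat) set \<Rightarrow> (nat \<times> nat) set" where
  "window_arcs c d \<nu> = {(i, j). 0 < i \<and> j + c \<le> d \<and> (i + c, j + c) \<in> \<nu>}"

text \<open>The nesting relation of \<open>a u b v\<close> with \<open>length u = k\<close> whose first position is a call
  returning at position \<open>k + 2\<close>, and which nests as \<open>\<nu>1\<close> on \<open>u\<close> and as \<open>\<nu>2\<close> on \<open>v\<close>.\<close>

definition enclose_arcs :: "nat \<Rightarrow> (nat \<times> nat) set \<Rightarrow> (nat \<times> nat) set \<Rightarrow> (nat \<times> nat) set" where
  "enclose_arcs k \<nu>1 \<nu>2 = insert (1, k + 2) (shift_arcs 1 \<nu>1 \<union> shift_arcs (k + 2) \<nu>2)"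

lemma nesting_relI:
  assumes "\<And>i j. (i, j) \<in> \<nu> \<Longrightarrow> 1 \<le> i \<and> i < j \<and> j \<le> n"
    and "\<And>i j j'. (i, j) \<in> \<nu> \<Longrightarrow> (i, j') \<in> \<nu> \<Longrightarrow> j = j'"
    and "\<And>i i' j. (i, j) \<in> \<nu> \<Longrightarrow> (i', j) \<in> \<nu> \<Longrightarrow> i = i'"
    and "\<And>i j i' j'. (i, j) \<in> \<nu> \<Longrightarrow> (i', j') \<in> \<nu> \<Longrightarrow> i < i' \<Longrightarrow> j < i' \<or> j' < j"
  shows "nesting_rel n \<nu>"
  unfolding nesting_rel_def using assms by fastforce

context
  fixes n :: nat and \<nu> :: "(nat \<times> nat) set"
  assumes nest: "nesting_rel n \<nu>"
begin

lemma nesting_rel_arc: "(i, j) \<in> \<nu> \<Longrightarrow> 1 \<le> i \<and> i < j \<and> j \<le> n"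
  using nest unfolding nesting_rel_def by auto

lemma nesting_rel_right_unique: "(i, j) \<in> \<nu> \<Longrightarrow> (i, j') \<in> \<nu> \<Longrightarrow> j = j'"
  using nest unfolding nesting_rel_def by blast

lemma nesting_rel_left_unique: "(i, j) \<in> \<nu> \<Longrightarrow> (i', j) \<in> \<nu> \<Longrightarrow> i = i'"
  using nest unfolding nesting_rel_def by blast

lemma nesting_rel_nested: "(i, j) \<in> \<nu> \<Longrightarrow> (i', j') \<in> \<nu> \<Longrightarrow> i < i' \<Longrightarrow> j < i' \<or> j' < j"
  using nest unfolding nesting_rel_def by blast

lemma nesting_rel_call_not_return: "(i, j) \<in> \<nu> \<Longrightarrow> (j, k) \<notin> \<nu>"
  using nesting_rel_nested[of i j j k] nesting_rel_arc[of i j] nesting_rel_arc[of j k] by auto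

lemma nesting_rel_shift_arcs: "nesting_rel (n + c) (shift_arcs c \<nu>)"
proof (rule nesting_relI)
  fix i j i' j'
  assume "(i, j) \<in> shift_arcs c \<nu>" "(i', j') \<in> shift_arcs c \<nu>" "i < i'"
  then have "c \<le> i" "c \<le> j" "c \<le> j'" "j - c < i' - c \<or> j' - c < j - c"
    using nesting_rel_nested[of "i - c" "j - c" "i' - c" "j' - c"] unfolding shift_arcs_def by auto
  then show "j < i' \<or> j' < j" by arith
next
  fix i j assume "(i, j) \<in> shift_arcs c \<nu>"
  then show "1 \<le> i \<and> i < j \<and> j \<le> n + c"
    using nesting_rel_arc[of "i - c" "j - c"] unfolding shift_arcs_def by auto
next
  fix i j j' assume "(i, j) \<in> shift_arcs c \<nu>" "(i, j') \<in> shift_arcs c \<nu>"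
  then show "j = j'"
    using nesting_rel_right_unique[of "i - c" "j - c" "j' - c"] unfolding shift_arcs_def by auto
next
  fix i i' j assume "(i, j) \<in> shift_arcs c \<nu>" "(i', j) \<in> shift_arcs c \<nu>"
  then show "i = i'"
    using nesting_rel_left_unique[of "i - c" "j - c" "i' - c"] unfolding shift_arcs_def by auto
qed

lemma nesting_rel_window_arcs: "nesting_rel (d - c) (window_arcs c d \<nu>)"
proof (rule nesting_relI)
  fix i j i' j'
  assume "(i, j) \<in> window_arcs c d \<nu>" "(i', j') \<in> window_arcs c d \<nu>" "i < i'"
  then show "j < i' \<or> j' < j"
    using nesting_rel_nested[of "i + c" "j + c" "i' + c" "j' + c"] unfolding window_arcs_def by auto
next
  fix i j assume "(i, j) \<in> window_arcs c d \<nu>"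
  then show "1 \<le> i \<and> i < j \<and> j \<le> d - c"
    using nesting_rel_arc[of "i + c" "j + c"] unfolding window_arcs_def by auto
next
  fix i j j' assume "(i, j) \<in> window_arcs c d \<nu>" "(i, j') \<in> window_arcs c d \<nu>"
  then show "j = j'"
    using nesting_rel_right_unique[of "i + c" "j + c" "j' + c"] unfolding window_arcs_def by auto
next
  fix i i' j assume "(i, j) \<in> window_arcs c d \<nu>" "(i', j) \<in> window_arcs c d \<nu>"
  then show "i = i'"
    using nesting_rel_left_unique[of "i + c" "j + c" "i' + c"] unfolding window_arcs_def by auto
qed

lemma shift_arcs_bounds: "(i, j) \<in> shift_arcs c \<nu> \<Longrightarrow> c < i \<and> i < j \<and> j \<le> n + c"
  using nesting_rel_arc[of "i - c" "j - c"] unfolding shift_arcs_def by auto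

lemma mem_shift_window_arcs:
  "(i, j) \<in> shift_arcs c (window_arcs c d \<nu>) \<longleftrightarrow> c < i \<and> j \<le> d \<and> (i, j) \<in> \<nu>"
  using nesting_rel_arc[of i j] unfolding shift_arcs_def window_arcs_def by auto

lemma window_shift_arcs:
  assumes "n + c \<le> d"
  shows "window_arcs c d (shift_arcs c \<nu>) = \<nu>"
proof -
  have "(i, j) \<in> window_arcs c d (shift_arcs c \<nu>) \<longleftrightarrow> (i, j) \<in> \<nu>" for i j
    using nesting_rel_arc[of i j] assms unfolding window_arcs_def shift_arcs_def by auto
  then show ?thesis by auto
qed

end

lemma nesting_rel_enclose_arcs:
  assumes \<nu>1: "nesting_rel k \<nu>1" and \<nu>2: "nesting_rel m \<nu>2"
  shows "nesting_rel (k + m + 2) (enclose_arcs k \<nu>1 \<nu>2)"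
proof -
  note s1 = nesting_rel_shift_arcs[OF \<nu>1, of 1] and s2 = nesting_rel_shift_arcs[OF \<nu>2, of "k + 2"]
  note b1 = shift_arcs_bounds[OF \<nu>1, of _ _ 1] and b2 = shift_arcs_bounds[OF \<nu>2, of _ _ "k + 2"]
  note sep = b1[simplified] b2[simplified]
  have arc: "(i, j) = (1, k + 2) \<or> (i, j) \<in> shift_arcs 1 \<nu>1 \<or> (i, j) \<in> shift_arcs (k + 2) \<nu>2"
    if "(i, j) \<in> enclose_arcs k \<nu>1 \<nu>2" for i j
    using that unfolding enclose_arcs_def by auto
  show ?thesis
  proof (rule nesting_relI)
    fix i j assume "(i, j) \<in> enclose_arcs k \<nu>1 \<nu>2"
    then show "1 \<le> i \<and> i < j \<and> j \<le> k + m + 2"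
      using arc[of i j] b1[of i j] b2[of i j] by auto
  next
    fix i j j' assume "(i, j) \<in> enclose_arcs k \<nu>1 \<nu>2" "(i, j') \<in> enclose_arcs k \<nu>1 \<nu>2"
    from arc[OF this(1)] arc[OF this(2)] show "j = j'"
      by (elim disjE)
        (auto dest: nesting_rel_right_unique[OF s1, simplified] nesting_rel_right_unique[OF s2, simplified] sep,
          auto dest!: sep)
  next
    fix i i' j assume "(i, j) \<in> enclose_arcs k \<nu>1 \<nu>2" "(i', j) \<in> enclose_arcs k \<nu>1 \<nu>2"
    from arc[OF this(1)] arc[OF this(2)] show "i = i'"
      by (elim disjE)
        (auto dest: nesting_rel_left_unique[OF s1, simplified] nesting_rel_left_unique[OF s2, simplified] sep,
          auto dest!: sep)
  next
    fix i j i' j'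
    assume "(i, j) \<in> enclose_arcs k \<nu>1 \<nu>2" "(i', j') \<in> enclose_arcs k \<nu>1 \<nu>2" "i < i'"
    from arc[OF this(1)] arc[OF this(2)] \<open>i < i'\<close> show "j < i' \<or> j' < j"
      by (elim disjE)
        (auto dest: nesting_rel_nested[OF s1, simplified] nesting_rel_nested[OF s2, simplified] sep,
          auto dest!: sep)
  qed
qed

lemma enclose_arcs_cases:
  assumes \<nu>1: "nesting_rel k \<nu>1" and \<nu>2: "nesting_rel m \<nu>2" and arc: "(i, j) \<in> enclose_arcs k \<nu>1 \<nu>2"
  shows "i < j \<and> ((i, j) = (1, k + 2) \<or> (1 < i \<and> j \<le> k + 1) \<or> (k + 2 < i \<and> j \<le> k + m + 2))"
  using arc shift_arcs_bounds[OF \<nu>1, of i j 1] shift_arcs_bounds[OF \<nu>2, of i j "k + 2"]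
  unfolding enclose_arcs_def by auto

lemma window_enclose_arcs:
  assumes \<nu>1: "nesting_rel k \<nu>1" and \<nu>2: "nesting_rel m \<nu>2"
  shows "window_arcs 1 (k + 1) (enclose_arcs k \<nu>1 \<nu>2) = \<nu>1"
    and "window_arcs (k + 2) (k + m + 2) (enclose_arcs k \<nu>1 \<nu>2) = \<nu>2"
proof -
  have "(i, j) \<in> window_arcs 1 (k + 1) (enclose_arcs k \<nu>1 \<nu>2) \<longleftrightarrow> (i, j) \<in> \<nu>1" for i j
    using nesting_rel_arc[OF \<nu>1, of i j] nesting_rel_arc[OF \<nu>2, of "i - k - 1" "j - k - 1"]
    unfolding window_arcs_def enclose_arcs_def shift_arcs_def by auto
  then show "window_arcs 1 (k + 1) (enclose_arcs k \<nu>1 \<nu>2) = \<nu>1" by auto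
  have "(i, j) \<in> window_arcs (k + 2) (k + m + 2) (enclose_arcs k \<nu>1 \<nu>2) \<longleftrightarrow> (i, j) \<in> \<nu>2" for i j
    using nesting_rel_arc[OF \<nu>2, of i j] nesting_rel_arc[OF \<nu>1, of "i + k + 1" "j + k + 1"]
    unfolding window_arcs_def enclose_arcs_def shift_arcs_def by auto
  then show "window_arcs (k + 2) (k + m + 2) (enclose_arcs k \<nu>1 \<nu>2) = \<nu>2" by auto
qed

lemma shift_window_arcs:
  assumes \<nu>: "nesting_rel (Suc n) \<nu>" and no_call: "\<And>j. (1, j) \<notin> \<nu>"
  shows "shift_arcs 1 (window_arcs 1 (Suc n) \<nu>) = \<nu>"
proof -
  have "(i, j) \<in> \<nu> \<Longrightarrow> 1 < i \<and> j \<le> Suc n" for i j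
    using nesting_rel_arc[OF \<nu>, of i j] no_call[of j] by (cases "i = 1") auto
  then have "(i, j) \<in> shift_arcs 1 (window_arcs 1 (Suc n) \<nu>) \<longleftrightarrow> (i, j) \<in> \<nu>" for i j
    by (auto simp: mem_shift_window_arcs[OF \<nu>])
  then show ?thesis by auto
qed

lemma enclose_window_arcs:
  assumes \<nu>: "nesting_rel (Suc n) \<nu>" and call: "(1, k + 2) \<in> \<nu>"
  shows "enclose_arcs k (window_arcs 1 (k + 1) \<nu>) (window_arcs (k + 2) (Suc n) \<nu>) = \<nu>"
proof -
  have "(i, j) = (1, k + 2) \<or> (1 < i \<and> j \<le> k + 1) \<or> (k + 2 < i \<and> j \<le> Suc n)"
    if arc: "(i, j) \<in> \<nu>" for i j
  proof -
    have "j = k + 2" if "i = 1" using that arc call nesting_rel_right_unique[OF \<nu>] by blast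
    moreover have "i \<noteq> k + 2" using arc call nesting_rel_call_not_return[OF \<nu>] by blast
    moreover have "1 < i \<Longrightarrow> i < k + 2 \<Longrightarrow> j < k + 2"
      using nesting_rel_nested[OF \<nu> call arc] nesting_rel_arc[OF \<nu> arc] by auto
    ultimately show ?thesis using nesting_rel_arc[OF \<nu> arc] by (cases "i = 1") auto
  qed
  note arc_cases = this
  have "(i, j) \<in> enclose_arcs k (window_arcs 1 (k + 1) \<nu>) (window_arcs (k + 2) (Suc n) \<nu>) \<longleftrightarrow>
      (i, j) \<in> \<nu>" for i j
    using arc_cases[of i j] call by (auto simp: enclose_arcs_def mem_shift_window_arcs[OF \<nu>])
  then show ?thesis by auto
qed

lemma finite_nesting_rels: "finite (nesting_rels n)"
proof (rule finite_subset)
  show "nesting_rels n \<subseteq> Pow ({1..n} \<times> {1..n})"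
    unfolding nesting_rels_def nesting_rel_def by auto
qed simp

lemma sum_nesting_rels_no_call:
  "(\<Sum>\<nu>\<in>{\<nu>\<in>nesting_rels (Suc n). \<forall>j. (1, j) \<notin> \<nu>}. f \<nu>) = (\<Sum>\<nu>\<in>nesting_rels n. f (shift_arcs 1 \<nu>))"
proof (rule sum.reindex_bij_witness[where i="shift_arcs 1" and j="window_arcs 1 (Suc n)"])
  fix \<nu> assume "\<nu> \<in> {\<nu>\<in>nesting_rels (Suc n). \<forall>j. (1, j) \<notin> \<nu>}"
  then have \<nu>: "nesting_rel (Suc n) \<nu>" and no_call: "\<And>j. (1, j) \<notin> \<nu>"
    by (auto simp: nesting_rels_def)
  show "shift_arcs 1 (window_arcs 1 (Suc n) \<nu>) = \<nu>" by (rule shift_window_arcs[OF \<nu> no_call])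
  then show "f (shift_arcs 1 (window_arcs 1 (Suc n) \<nu>)) = f \<nu>" by simp
  show "window_arcs 1 (Suc n) \<nu> \<in> nesting_rels n"
    using nesting_rel_window_arcs[OF \<nu>, where c=1 and d="Suc n"] by (simp add: nesting_rels_def)
next
  fix \<nu> assume "\<nu> \<in> nesting_rels n"
  then have \<nu>: "nesting_rel n \<nu>" by (simp add: nesting_rels_def)
  show "window_arcs 1 (Suc n) (shift_arcs 1 \<nu>) = \<nu>" by (rule window_shift_arcs[OF \<nu>]) simp
  show "shift_arcs 1 \<nu> \<in> {\<nu>\<in>nesting_rels (Suc n). \<forall>j. (1, j) \<notin> \<nu>}"
    using nesting_rel_shift_arcs[OF \<nu>, of 1] shift_arcs_bounds[OF \<nu>, of 1] by (auto simp: nesting_rels_def)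
qed

lemma sum_nesting_rels_call:
  assumes "k < n"
  shows "(\<Sum>\<nu>\<in>{\<nu>\<in>nesting_rels (Suc n). (1, k + 2) \<in> \<nu>}. f \<nu>) =
    (\<Sum>\<nu>1\<in>nesting_rels k. \<Sum>\<nu>2\<in>nesting_rels (n - Suc k). f (enclose_arcs k \<nu>1 \<nu>2))"
proof -
  have len: "k + (n - Suc k) + 2 = Suc n" using assms by simp
  have "(\<Sum>\<nu>\<in>{\<nu>\<in>nesting_rels (Suc n). (1, k + 2) \<in> \<nu>}. f \<nu>) =
      (\<Sum>(\<nu>1, \<nu>2)\<in>nesting_rels k \<times> nesting_rels (n - Suc k). f (enclose_arcs k \<nu>1 \<nu>2))"
  proof (rule sum.reindex_bij_witness[where i="\<lambda>(\<nu>1, \<nu>2). enclose_arcs k \<nu>1 \<nu>2"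
        and j="\<lambda>\<nu>. (window_arcs 1 (k + 1) \<nu>, window_arcs (k + 2) (Suc n) \<nu>)"])
    fix \<nu> assume "\<nu> \<in> {\<nu>\<in>nesting_rels (Suc n). (1, k + 2) \<in> \<nu>}"
    then have \<nu>: "nesting_rel (Suc n) \<nu>" and call: "(1, k + 2) \<in> \<nu>" by (auto simp: nesting_rels_def)
    show "(case (window_arcs 1 (k + 1) \<nu>, window_arcs (k + 2) (Suc n) \<nu>) of
        (\<nu>1, \<nu>2) \<Rightarrow> enclose_arcs k \<nu>1 \<nu>2) = \<nu>"
      using enclose_window_arcs[OF \<nu> call] by simp
    then show "(case (window_arcs 1 (k + 1) \<nu>, window_arcs (k + 2) (Suc n) \<nu>) of
        (\<nu>1, \<nu>2) \<Rightarrow> f (enclose_arcs k \<nu>1 \<nu>2)) = f \<nu>"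
      by simp
    show "(window_arcs 1 (k + 1) \<nu>, window_arcs (k + 2) (Suc n) \<nu>) \<in> nesting_rels k \<times> nesting_rels (n - Suc k)"
      using nesting_rel_window_arcs[OF \<nu>, where c=1 and d="k + 1"]
        nesting_rel_window_arcs[OF \<nu>, where c="k + 2" and d="Suc n"]
      by (simp add: nesting_rels_def)
  next
    fix p assume "p \<in> nesting_rels k \<times> nesting_rels (n - Suc k)"
    then obtain \<nu>1 \<nu>2 where p: "p = (\<nu>1, \<nu>2)" and \<nu>1: "nesting_rel k \<nu>1"
      and \<nu>2: "nesting_rel (n - Suc k) \<nu>2" by (auto simp: nesting_rels_def)
    show "(window_arcs 1 (k + 1) (case p of (\<nu>1, \<nu>2) \<Rightarrow> enclose_arcs k \<nu>1 \<nu>2),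
        window_arcs (k + 2) (Suc n) (case p of (\<nu>1, \<nu>2) \<Rightarrow> enclose_arcs k \<nu>1 \<nu>2)) = p"
      using window_enclose_arcs[OF \<nu>1 \<nu>2] len p by simp
    show "(case p of (\<nu>1, \<nu>2) \<Rightarrow> enclose_arcs k \<nu>1 \<nu>2) \<in> {\<nu>\<in>nesting_rels (Suc n). (1, k + 2) \<in> \<nu>}"
      using nesting_rel_enclose_arcs[OF \<nu>1 \<nu>2] len p by (simp add: nesting_rels_def enclose_arcs_def)
  qed
  then show ?thesis by (simp add: sum.cartesian_product)
qed

lemma sum_nesting_rels_Suc:
  "(\<Sum>\<nu>\<in>nesting_rels (Suc n). f \<nu>) = (\<Sum>\<nu>\<in>nesting_rels n. f (shift_arcs 1 \<nu>)) +
     (\<Sum>k<n. \<Sum>\<nu>1\<in>nesting_rels k. \<Sum>\<nu>2\<in>nesting_rels (n - Suc k). f (enclose_arcs k \<nu>1 \<nu>2))"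
proof -
  have split: "f \<nu> = (if \<forall>j. (1, j) \<notin> \<nu> then f \<nu> else 0) + (\<Sum>k<n. if (1, k + 2) \<in> \<nu> then f \<nu> else 0)"
    if "\<nu> \<in> nesting_rels (Suc n)" for \<nu>
  proof (cases "\<forall>j. (1, j) \<notin> \<nu>")
    case False
    then obtain j where call: "(1, j) \<in> \<nu>" by auto
    have \<nu>: "nesting_rel (Suc n) \<nu>" using that by (simp add: nesting_rels_def)
    have j: "2 \<le> j" "j \<le> Suc n" using nesting_rel_arc[OF \<nu> call] by auto
    have "(1, k + 2) \<in> \<nu> \<longleftrightarrow> k = j - 2" for k
    proof
      assume "(1, k + 2) \<in> \<nu>"
      then show "k = j - 2" using nesting_rel_right_unique[OF \<nu> call] by fastforce
    next
      assume "k = j - 2"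
      then have "k + 2 = j" using j by simp
      then show "(1, k + 2) \<in> \<nu>" using call by simp
    qed
    moreover have "j - 2 < n" using j by simp
    ultimately have "(\<Sum>k<n. if (1, k + 2) \<in> \<nu> then f \<nu> else 0) = f \<nu>"
      by simp
    with False show ?thesis by (simp only: if_False add_0)
  qed simp
  have "(\<Sum>\<nu>\<in>nesting_rels (Suc n). f \<nu>) =
      (\<Sum>\<nu>\<in>{\<nu>\<in>nesting_rels (Suc n). \<forall>j. (1, j) \<notin> \<nu>}. f \<nu>) +
      (\<Sum>k<n. \<Sum>\<nu>\<in>{\<nu>\<in>nesting_rels (Suc n). (1, k + 2) \<in> \<nu>}. f \<nu>)"
    by (subst sum.cong[OF refl split])
      (simp_all add: sum.distrib sum.swap[of _ "{..<n}"] sum.inter_filter finite_nesting_rels)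
  also have "(\<Sum>\<nu>\<in>{\<nu>\<in>nesting_rels (Suc n). \<forall>j. (1, j) \<notin> \<nu>}. f \<nu>) =
      (\<Sum>\<nu>\<in>nesting_rels n. f (shift_arcs 1 \<nu>))"
    by (rule sum_nesting_rels_no_call)
  also have "(\<Sum>k<n. \<Sum>\<nu>\<in>{\<nu>\<in>nesting_rels (Suc n). (1, k + 2) \<in> \<nu>}. f \<nu>) =
      (\<Sum>k<n. \<Sum>\<nu>1\<in>nesting_rels k. \<Sum>\<nu>2\<in>nesting_rels (n - Suc k). f (enclose_arcs k \<nu>1 \<nu>2))"
    by (rule sum.cong[OF refl sum_nesting_rels_call]) simp
  finally show ?thesis .
qed

section \<open>Weights of runs\<close>

lemma step_weight_return:
  assumes "nesting_rel n \<nu>" "(i, j) \<in> \<nu>"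
  shows "step_weight A (w, \<nu>) qs j = dret A (qs ! (j - 1)) (qs ! (i - 1)) (w ! (j - 1)) (qs ! j)"
proof -
  have "(THE i. (i, j) \<in> \<nu>) = i"
    using assms nesting_rel_left_unique by blast
  then show ?thesis using assms unfolding step_weight_def Let_def by auto
qed

lemma step_weight_call:
  assumes "nesting_rel n \<nu>" "(j, j') \<in> \<nu>"
  shows "step_weight A (w, \<nu>) qs j = dcall A (qs ! (j - 1)) (w ! (j - 1)) (qs ! j)"
  using assms nesting_rel_call_not_return unfolding step_weight_def Let_def by auto

lemma step_weight_internal:
  assumes "\<And>i. (i, j) \<notin> \<nu>" "\<And>j'. (j, j') \<notin> \<nu>"
  shows "step_weight A (w, \<nu>) qs j = dint A (qs ! (j - 1)) (w ! (j - 1)) (qs ! j)"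
  using assms unfolding step_weight_def Let_def by auto

lemma step_weight_window:
  assumes \<nu>: "nesting_rel N \<nu>"
    and closed: "\<And>i j. (i, j) \<in> \<nu> \<Longrightarrow> (c < i \<and> i \<le> c + n) = (c < j \<and> j \<le> c + n)"
    and j: "1 \<le> j" "j \<le> n"
    and letters: "\<And>x. x < n \<Longrightarrow> W ! (x + c) = w ! x"
    and states: "\<And>x. x \<le> n \<Longrightarrow> QS ! (x + c) = qs ! x"
  shows "step_weight A (W, \<nu>) QS (j + c) = step_weight A (w, window_arcs c (c + n) \<nu>) qs j"
proof -
  let ?\<nu>' = "window_arcs c (c + n) \<nu>"
  have \<nu>': "nesting_rel n ?\<nu>'" using nesting_rel_window_arcs[OF \<nu>, where c=c and d="c + n"] by simp
  have prev: "QS ! (j + c - 1) = qs ! (j - 1)" "W ! (j + c - 1) = w ! (j - 1)"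
    using states[of "j - 1"] letters[of "j - 1"] j by (simp_all add: add.commute)
  have return: "(i + c, j + c) \<in> \<nu> \<longleftrightarrow> (i, j) \<in> ?\<nu>'" if "0 < i" for i
    using j that unfolding window_arcs_def by auto
  have call: "(j + c, y + c) \<in> \<nu> \<longleftrightarrow> (j, y) \<in> ?\<nu>'" for y
    using j nesting_rel_arc[OF \<nu>, of "j + c" "y + c"] closed[of "j + c" "y + c"]
    unfolding window_arcs_def by auto
  consider (ret) i where "(i, j) \<in> ?\<nu>'" | (cl) y where "(j, y) \<in> ?\<nu>'"
    | (int) "\<And>i. (i, j) \<notin> ?\<nu>'" "\<And>y. (j, y) \<notin> ?\<nu>'"
    by blast
  then show ?thesis
  proof cases
    case (ret i)
    then have i: "0 < i" "i < j" using nesting_rel_arc[OF \<nu>', of i j] by auto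
    have "QS ! (i + c - 1) = qs ! (i - 1)" using states[of "i - 1"] i j by (simp add: add.commute)
    then show ?thesis
      using ret i return[of i] prev states[of j] j
      by (simp add: step_weight_return[OF \<nu>] step_weight_return[OF \<nu>'])
  next
    case (cl y)
    then show ?thesis
      using call[of y] prev states[of j] j
      by (simp add: step_weight_call[OF \<nu>] step_weight_call[OF \<nu>'])
  next
    case int
    have "(i, j + c) \<notin> \<nu>" for i
    proof
      assume arc: "(i, j + c) \<in> \<nu>"
      then have "c < i" using closed[OF arc] j by auto
      then show False using arc return[of "i - c"] int(1)[of "i - c"] by simp
    qed
    moreover have "(j + c, y) \<notin> \<nu>" for y
    proof
      assume arc: "(j + c, y) \<in> \<nu>"
      then have "c < y" using closed[OF arc] j by auto
      then show False using arc call[of "y - c"] int(2)[of "y - c"] by simp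
    qed
    ultimately show ?thesis
      using int prev states[of j] j by (simp add: step_weight_internal)
  qed
qed

definition run_weight :: "('a, 'k::comm_semiring_1) wnwa \<Rightarrow> 'a nested_word \<Rightarrow> nat list \<Rightarrow> 'k" where
  "run_weight A nw qs = (\<Prod>j\<in>{1..length (fst nw)}. step_weight A nw qs j)"

lemma prod_atLeast1_add:
  fixes f :: "nat \<Rightarrow> 'b::comm_monoid_mult"
  shows "prod f {1..a + b} = prod f {1..a} * prod (\<lambda>j. f (j + a)) {1..b}"
  using prod.ub_add_nat[of 1 a f b] prod.shift_bounds_cl_nat_ivl[of f 1 a b] by (simp add: add.commute)

lemma prod_atLeast1_Suc:
  fixes f :: "nat \<Rightarrow> 'b::comm_monoid_mult"
  shows "prod f {1..Suc a} = f 1 * prod (\<lambda>j. f (j + 1)) {1..a}"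
  using prod_atLeast1_add[of f 1 a] by simp

lemma prod_atLeast1_Suc_add_Suc:
  fixes f :: "nat \<Rightarrow> 'b::comm_monoid_mult"
  shows "prod f {1..Suc k + Suc m} =
    f 1 * (\<Prod>j\<in>{1..k}. f (j + 1)) * f (k + 2) * (\<Prod>j\<in>{1..m}. f (j + (k + 2)))"
proof -
  have "prod f {1..Suc k + Suc m} =
      (f 1 * (\<Prod>j\<in>{1..k}. f (j + 1))) * (f (1 + Suc k) * (\<Prod>j\<in>{1..m}. f (j + 1 + Suc k)))"
    by (simp only: prod_atLeast1_add prod_atLeast1_Suc)
  then show ?thesis by (simp add: ac_simps)
qed

lemma prod_step_weight_window:
  assumes \<nu>: "nesting_rel N \<nu>"
    and closed: "\<And>i j. (i, j) \<in> \<nu> \<Longrightarrow> (c < i \<and> i \<le> c + n) = (c < j \<and> j \<le> c + n)"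
    and len: "length w = n"
    and letters: "\<And>x. x < n \<Longrightarrow> W ! (x + c) = w ! x"
    and states: "\<And>x. x \<le> n \<Longrightarrow> QS ! (x + c) = qs ! x"
  shows "(\<Prod>j\<in>{1..n}. step_weight A (W, \<nu>) QS (j + c)) = run_weight A (w, window_arcs c (c + n) \<nu>) qs"
  unfolding run_weight_def fst_conv len
  by (rule prod.cong[OF refl], rule step_weight_window[OF \<nu> closed _ _ letters states]) auto

lemma run_weight_shift_arcs:
  assumes \<nu>: "nesting_rel n \<nu>" and len: "length w = n" "length qs = Suc n"
  shows "run_weight A (a # w, shift_arcs 1 \<nu>) (p # qs) = dint A p a (qs ! 0) * run_weight A (w, \<nu>) qs"
proof -
  have \<nu>1: "nesting_rel (Suc n) (shift_arcs 1 \<nu>)" using nesting_rel_shift_arcs[OF \<nu>, of 1] by simp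
  note bounds = shift_arcs_bounds[OF \<nu>, of _ _ 1]
  have "step_weight A (a # w, shift_arcs 1 \<nu>) (p # qs) 1 = dint A ((p # qs) ! 0) ((a # w) ! 0) ((p # qs) ! 1)"
    using step_weight_internal[where \<nu>="shift_arcs 1 \<nu>" and j=1 and A=A and w="a # w" and qs="p # qs"]
      bounds
    by fastforce
  then have first: "step_weight A (a # w, shift_arcs 1 \<nu>) (p # qs) 1 = dint A p a (qs ! 0)"
    by simp
  have "(\<Prod>j\<in>{1..n}. step_weight A (a # w, shift_arcs 1 \<nu>) (p # qs) (j + 1)) =
      run_weight A (w, window_arcs 1 (1 + n) (shift_arcs 1 \<nu>)) qs"
    by (rule prod_step_weight_window[OF \<nu>1 _ len(1)]) (auto dest!: bounds[simplified])
  also have "window_arcs 1 (1 + n) (shift_arcs 1 \<nu>) = \<nu>"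
    by (rule window_shift_arcs[OF \<nu>]) simp
  finally show ?thesis
    using prod_atLeast1_Suc[of "step_weight A (a # w, shift_arcs 1 \<nu>) (p # qs)" n] first len
    by (simp add: run_weight_def)
qed

lemma run_weight_enclose_arcs:
  assumes \<nu>1: "nesting_rel k \<nu>1" and \<nu>2: "nesting_rel m \<nu>2"
    and len: "length u = k" "length v = m" "length qs1 = Suc k" "length qs2 = Suc m"
  shows "run_weight A (a # u @ b # v, enclose_arcs k \<nu>1 \<nu>2) (p # qs1 @ qs2) =
    dcall A p a (qs1 ! 0) * run_weight A (u, \<nu>1) qs1 * dret A (qs1 ! k) p b (qs2 ! 0) * run_weight A (v, \<nu>2) qs2"
proof -
  let ?W = "a # u @ b # v" and ?\<nu> = "enclose_arcs k \<nu>1 \<nu>2" and ?Q = "p # qs1 @ qs2"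
  let ?f = "step_weight A (?W, ?\<nu>) ?Q"
  have \<nu>: "nesting_rel (k + m + 2) ?\<nu>" by (rule nesting_rel_enclose_arcs[OF \<nu>1 \<nu>2])
  have call: "(1, k + 2) \<in> ?\<nu>" by (simp add: enclose_arcs_def)
  note arcs = enclose_arcs_cases[OF \<nu>1 \<nu>2]
  have closed1: "(1 < i \<and> i \<le> 1 + k) = (1 < j \<and> j \<le> 1 + k)"
    and closed2: "(k + 2 < i \<and> i \<le> k + 2 + m) = (k + 2 < j \<and> j \<le> k + 2 + m)"
    if "(i, j) \<in> ?\<nu>" for i j
    using arcs[OF that] by auto
  have "?f 1 = dcall A (?Q ! 0) (?W ! 0) (?Q ! 1)"
    using step_weight_call[OF \<nu> call, of A ?W ?Q] by simp
  also have "\<dots> = dcall A p a (qs1 ! 0)"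
    using len by (simp add: nth_append)
  moreover have "?f (k + 2) = dret A (?Q ! (k + 1)) (?Q ! 0) (?W ! (k + 1)) (?Q ! (k + 2))"
    using step_weight_return[OF \<nu> call, of A ?W ?Q] by simp
  moreover have "\<dots> = dret A (qs1 ! k) p b (qs2 ! 0)"
    using len by (simp add: nth_append)
  moreover have "(\<Prod>j\<in>{1..k}. ?f (j + 1)) = run_weight A (u, \<nu>1) qs1"
  proof -
    have "(\<Prod>j\<in>{1..k}. ?f (j + 1)) = run_weight A (u, window_arcs 1 (1 + k) ?\<nu>) qs1"
      by (rule prod_step_weight_window[OF \<nu> closed1 len(1)])
        (use len in \<open>auto simp: nth_append\<close>)
    then show ?thesis using window_enclose_arcs(1)[OF \<nu>1 \<nu>2] by (simp add: add.commute)
  qed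
  moreover have "(\<Prod>j\<in>{1..m}. ?f (j + (k + 2))) = run_weight A (v, \<nu>2) qs2"
  proof -
    have "(\<Prod>j\<in>{1..m}. ?f (j + (k + 2))) = run_weight A (v, window_arcs (k + 2) (k + 2 + m) ?\<nu>) qs2"
      by (rule prod_step_weight_window[OF \<nu> closed2 len(2)]) (use len in \<open>auto simp: nth_append\<close>)
    then show ?thesis using window_enclose_arcs(2)[OF \<nu>1 \<nu>2] by (simp add: ac_simps)
  qed
  moreover have "length ?W = Suc k + Suc m" using len by simp
  then have "run_weight A (?W, ?\<nu>) ?Q = ?f 1 * (\<Prod>j\<in>{1..k}. ?f (j + 1)) * ?f (k + 2) *
      (\<Prod>j\<in>{1..m}. ?f (j + (k + 2)))"
    unfolding run_weight_def fst_conv by (simp only: prod_atLeast1_Suc_add_Suc)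
  ultimately show ?thesis by simp
qed

definition runs_between :: "('a, 'k) wnwa \<Rightarrow> nat \<Rightarrow> nat \<Rightarrow> nat \<Rightarrow> nat list set" where
  "runs_between A n p q = {qs \<in> runs A n. qs ! 0 = p \<and> qs ! n = q}"

lemma finite_runs: "finite (states A) \<Longrightarrow> finite (runs A n)"
  unfolding runs_def using finite_lists_length_eq[of "states A" "Suc n"] by (simp add: conj_commute)

lemma nth_run_in_states: "qs \<in> runs A n \<Longrightarrow> i \<le> n \<Longrightarrow> qs ! i \<in> states A"
  unfolding runs_def by (auto intro: nth_mem)

lemma finite_runs_between: "finite (states A) \<Longrightarrow> finite (runs_between A n p q)"
  unfolding runs_between_def by (simp add: finite_runs)

lemma sum_runs_by_ends:
  assumes fin: "finite (states A)"
  shows "(\<Sum>qs\<in>runs A n. f qs) = (\<Sum>p\<in>states A. \<Sum>q\<in>states A. \<Sum>qs\<in>runs_between A n p q. f qs)"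
proof -
  have "(\<Sum>qs\<in>runs A n. f qs) =
      (\<Sum>pq\<in>states A \<times> states A. \<Sum>qs\<in>{qs\<in>runs A n. (qs ! 0, qs ! n) = pq}. f qs)"
    by (rule sum.group[symmetric]) (auto simp: fin finite_runs nth_run_in_states)
  then show ?thesis by (simp add: sum.cartesian_product' runs_between_def)
qed

lemma sum_runs_between_Cons:
  assumes fin: "finite (states A)" and p: "p \<in> states A"
  shows "(\<Sum>qs\<in>runs_between A (Suc n) p q. f qs) = (\<Sum>r\<in>states A. \<Sum>qs\<in>runs_between A n r q. f (p # qs))"
proof -
  have "(\<Sum>r\<in>states A. \<Sum>qs\<in>runs_between A n r q. f (p # qs)) =
      (\<Sum>(r, qs)\<in>Sigma (states A) (\<lambda>r. runs_between A n r q). f (p # qs))"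
    by (rule sum.Sigma) (simp_all add: fin finite_runs_between)
  also have "\<dots> = (\<Sum>qs\<in>runs_between A (Suc n) p q. f qs)"
  proof (rule sum.reindex_bij_witness[where j="\<lambda>(r, qs). p # qs" and i="\<lambda>qs. (tl qs ! 0, tl qs)"])
    fix qs assume "qs \<in> runs_between A (Suc n) p q"
    then obtain qs' where "qs = p # qs'" "qs' \<in> runs A n" "qs' ! n = q"
      unfolding runs_between_def runs_def by (cases qs) auto
    then show "(case (tl qs ! 0, tl qs) of (r, qs) \<Rightarrow> p # qs) = qs"
      "(tl qs ! 0, tl qs) \<in> Sigma (states A) (\<lambda>r. runs_between A n r q)"
      unfolding runs_between_def runs_def by auto
  qed (use p in \<open>auto simp: runs_between_def runs_def\<close>)
  finally show ?thesis ..
qed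

lemma sum_runs_between_append:
  assumes fin: "finite (states A)"
  shows "(\<Sum>qs\<in>runs_between A (Suc (k + m)) p q. f qs) =
    (\<Sum>s\<in>states A. \<Sum>t\<in>states A. \<Sum>qs1\<in>runs_between A k p s. \<Sum>qs2\<in>runs_between A m t q. f (qs1 @ qs2))"
proof -
  let ?R = "\<lambda>st. runs_between A k p (fst st) \<times> runs_between A m (snd st) q"
  have "(\<Sum>s\<in>states A. \<Sum>t\<in>states A. \<Sum>qs1\<in>runs_between A k p s. \<Sum>qs2\<in>runs_between A m t q. f (qs1 @ qs2)) =
      (\<Sum>st\<in>states A \<times> states A. \<Sum>qs12\<in>?R st. f (fst qs12 @ snd qs12))"
    by (simp only: sum.cartesian_product' fst_conv snd_conv)
  also have "\<dots> = (\<Sum>(st, qs1, qs2)\<in>Sigma (states A \<times> states A) ?R. f (qs1 @ qs2))"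
    by (subst sum.Sigma) (auto simp: fin finite_runs_between split_def)
  also have "\<dots> = (\<Sum>qs\<in>runs_between A (Suc (k + m)) p q. f qs)"
  proof (rule sum.reindex_bij_witness[where j="\<lambda>(st, qs1, qs2). qs1 @ qs2"
        and i="\<lambda>qs. ((qs ! k, qs ! Suc k), take (Suc k) qs, drop (Suc k) qs)"])
    fix qs assume qs: "qs \<in> runs_between A (Suc (k + m)) p q"
    then have len: "length qs = Suc (Suc (k + m))" and sub: "set qs \<subseteq> states A"
      by (auto simp: runs_between_def runs_def)
    then show "(case ((qs ! k, qs ! Suc k), take (Suc k) qs, drop (Suc k) qs) of
        (st, qs1, qs2) \<Rightarrow> qs1 @ qs2) = qs" by simp
    have "qs ! k \<in> states A" "qs ! Suc k \<in> states A" using len sub by (auto intro!: nth_mem)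
    with qs len show "((qs ! k, qs ! Suc k), take (Suc k) qs, drop (Suc k) qs) \<in> Sigma (states A \<times> states A) ?R"
      by (auto simp: runs_between_def runs_def dest: in_set_takeD in_set_dropD)
  qed (auto simp: runs_between_def runs_def nth_append)
  finally show ?thesis ..
qed

definition nw_weight :: "('a, 'k::comm_semiring_1) wnwa \<Rightarrow> nat \<Rightarrow> nat \<Rightarrow> 'a nested_word \<Rightarrow> 'k" where
  "nw_weight A p q nw = (\<Sum>qs\<in>runs_between A (length (fst nw)) p q. run_weight A nw qs)"

definition word_weight :: "('a, 'k::comm_semiring_1) wnwa \<Rightarrow> nat \<Rightarrow> nat \<Rightarrow> 'a list \<Rightarrow> 'k" where
  "word_weight A p q w = (\<Sum>\<nu>\<in>nesting_rels (length w). nw_weight A p q (w, \<nu>))"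

lemma behaviour_eq_sum_nw_weight:
  assumes fin: "finite (states A)"
  shows "behaviour A nw = (\<Sum>p\<in>states A. \<Sum>q\<in>states A. init A p * nw_weight A p q nw * final A q)"
proof -
  have "behaviour A nw = (\<Sum>p\<in>states A. \<Sum>q\<in>states A. \<Sum>qs\<in>runs_between A (length (fst nw)) p q.
      init A p * run_weight A nw qs * final A q)"
    unfolding behaviour_def sum_runs_by_ends[OF fin] run_weight_def
    by (intro sum.cong refl) (auto simp: runs_between_def)
  then show ?thesis by (simp add: nw_weight_def sum_distrib_left sum_distrib_right)
qed

lemma nw_weight_shift_arcs:
  assumes fin: "finite (states A)" and p: "p \<in> states A" and \<nu>: "nesting_rel (length w) \<nu>"
  shows "nw_weight A p q (a # w, shift_arcs 1 \<nu>) = (\<Sum>r\<in>states A. dint A p a r * nw_weight A r q (w, \<nu>))"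
proof -
  have "nw_weight A p q (a # w, shift_arcs 1 \<nu>) =
      (\<Sum>r\<in>states A. \<Sum>qs\<in>runs_between A (length w) r q. run_weight A (a # w, shift_arcs 1 \<nu>) (p # qs))"
    unfolding nw_weight_def by (simp add: sum_runs_between_Cons[OF fin p])
  also have "\<dots> = (\<Sum>r\<in>states A. \<Sum>qs\<in>runs_between A (length w) r q. dint A p a r * run_weight A (w, \<nu>) qs)"
    using run_weight_shift_arcs[OF \<nu> refl]
    by (intro sum.cong refl) (auto simp: runs_between_def runs_def)
  finally show ?thesis by (simp add: nw_weight_def sum_distrib_left)
qed

lemma nw_weight_enclose_arcs:
  assumes fin: "finite (states A)" and p: "p \<in> states A"
    and \<nu>1: "nesting_rel (length u) \<nu>1" and \<nu>2: "nesting_rel (length v) \<nu>2"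
  shows "nw_weight A p q (a # u @ b # v, enclose_arcs (length u) \<nu>1 \<nu>2) =
    (\<Sum>r\<in>states A. \<Sum>s\<in>states A. \<Sum>t\<in>states A.
      dcall A p a r * nw_weight A r s (u, \<nu>1) * dret A s p b t * nw_weight A t q (v, \<nu>2))"
proof -
  let ?nw = "(a # u @ b # v, enclose_arcs (length u) \<nu>1 \<nu>2)"
  have "nw_weight A p q ?nw = (\<Sum>r\<in>states A. \<Sum>s\<in>states A. \<Sum>t\<in>states A.
      \<Sum>qs1\<in>runs_between A (length u) r s. \<Sum>qs2\<in>runs_between A (length v) t q.
        run_weight A ?nw (p # qs1 @ qs2))"
    unfolding nw_weight_def
    by (simp add: sum_runs_between_Cons[OF fin p] sum_runs_between_append[OF fin])
  also have "\<dots> = (\<Sum>r\<in>states A. \<Sum>s\<in>states A. \<Sum>t\<in>states A.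
      \<Sum>qs1\<in>runs_between A (length u) r s. \<Sum>qs2\<in>runs_between A (length v) t q.
        (dcall A p a r * run_weight A (u, \<nu>1) qs1) * (dret A s p b t * run_weight A (v, \<nu>2) qs2))"
    by (intro sum.cong refl)
      (auto simp: run_weight_enclose_arcs[OF \<nu>1 \<nu>2] runs_between_def runs_def mult.assoc)
  also have "\<dots> = (\<Sum>r\<in>states A. \<Sum>s\<in>states A. \<Sum>t\<in>states A.
      (\<Sum>qs1\<in>runs_between A (length u) r s. dcall A p a r * run_weight A (u, \<nu>1) qs1) *
      (\<Sum>qs2\<in>runs_between A (length v) t q. dret A s p b t * run_weight A (v, \<nu>2) qs2))"
    by (simp only: sum_product)
  also have "\<dots> = (\<Sum>r\<in>states A. \<Sum>s\<in>states A. \<Sum>t\<in>states A.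
      (dcall A p a r * nw_weight A r s (u, \<nu>1)) * (dret A s p b t * nw_weight A t q (v, \<nu>2)))"
    by (simp only: nw_weight_def fst_conv sum_distrib_left)
  finally show ?thesis by (simp only: mult.assoc)
qed

lemma word_weight_Nil:
  assumes "p \<in> states A"
  shows "word_weight A p q [] = (if p = q then 1 else 0)"
proof -
  have "nesting_rels 0 = {{}}" unfolding nesting_rels_def nesting_rel_def by auto
  moreover have "runs_between A 0 p q = (if p = q then {[p]} else {})"
    using assms by (auto simp: runs_between_def runs_def length_Suc_conv)
  ultimately show ?thesis by (simp add: word_weight_def nw_weight_def run_weight_def)
qed

lemma sum_swap_triple:
  "(\<Sum>x\<in>X. \<Sum>r\<in>R. \<Sum>s\<in>S. \<Sum>t\<in>T. f x r s t) = (\<Sum>r\<in>R. \<Sum>s\<in>S. \<Sum>t\<in>T. \<Sum>x\<in>X. f x r s t)"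
  by (subst sum.swap) (simp only: sum.swap[of _ X])

lemma sum_nw_weight_shift_arcs:
  assumes fin: "finite (states A)" and p: "p \<in> states A"
  shows "(\<Sum>\<nu>\<in>nesting_rels (length w). nw_weight A p q (a # w, shift_arcs 1 \<nu>)) =
    (\<Sum>r\<in>states A. dint A p a r * word_weight A r q w)"
proof -
  have "(\<Sum>\<nu>\<in>nesting_rels (length w). nw_weight A p q (a # w, shift_arcs 1 \<nu>)) =
      (\<Sum>\<nu>\<in>nesting_rels (length w). \<Sum>r\<in>states A. dint A p a r * nw_weight A r q (w, \<nu>))"
    by (rule sum.cong[OF refl], rule nw_weight_shift_arcs[OF fin p]) (simp add: nesting_rels_def)
  then show ?thesis
    by (simp add: word_weight_def sum_distrib_left sum.swap[of _ "nesting_rels (length w)"])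
qed

lemma sum_nw_weight_enclose_arcs:
  assumes fin: "finite (states A)" and p: "p \<in> states A" and k: "k < length w"
  shows "(\<Sum>\<nu>1\<in>nesting_rels k. \<Sum>\<nu>2\<in>nesting_rels (length w - Suc k).
      nw_weight A p q (a # w, enclose_arcs k \<nu>1 \<nu>2)) =
    (\<Sum>r\<in>states A. \<Sum>s\<in>states A. \<Sum>t\<in>states A. dcall A p a r * word_weight A r s (take k w) *
      (dret A s p (w ! k) t * word_weight A t q (drop (Suc k) w)))"
proof -
  define u b v where "u = take k w" and "b = w ! k" and "v = drop (Suc k) w"
  have w: "w = u @ b # v" and len: "length u = k" "length v = length w - Suc k"
    using k by (simp_all add: u_def b_def v_def id_take_nth_drop)
  have "(\<Sum>\<nu>1\<in>nesting_rels k. \<Sum>\<nu>2\<in>nesting_rels (length w - Suc k). nw_weight A p q (a # w, enclose_arcs k \<nu>1 \<nu>2)) =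
      (\<Sum>\<nu>1\<in>nesting_rels k. \<Sum>\<nu>2\<in>nesting_rels (length w - Suc k). \<Sum>r\<in>states A. \<Sum>s\<in>states A. \<Sum>t\<in>states A.
        dcall A p a r * nw_weight A r s (u, \<nu>1) * (dret A s p b t * nw_weight A t q (v, \<nu>2)))"
  proof (intro sum.cong refl)
    fix \<nu>1 \<nu>2 assume "\<nu>1 \<in> nesting_rels k" "\<nu>2 \<in> nesting_rels (length w - Suc k)"
    with len have "nesting_rel (length u) \<nu>1" "nesting_rel (length v) \<nu>2"
      by (simp_all add: nesting_rels_def)
    from nw_weight_enclose_arcs[OF fin p this, of q a b]
    show "nw_weight A p q (a # w, enclose_arcs k \<nu>1 \<nu>2) = (\<Sum>r\<in>states A. \<Sum>s\<in>states A. \<Sum>t\<in>states A.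
        dcall A p a r * nw_weight A r s (u, \<nu>1) * (dret A s p b t * nw_weight A t q (v, \<nu>2)))"
      unfolding w len(1)[symmetric] by (simp only: mult.assoc)
  qed
  also have "\<dots> = (\<Sum>r\<in>states A. \<Sum>s\<in>states A. \<Sum>t\<in>states A.
      \<Sum>\<nu>1\<in>nesting_rels k. \<Sum>\<nu>2\<in>nesting_rels (length w - Suc k).
        dcall A p a r * nw_weight A r s (u, \<nu>1) * (dret A s p b t * nw_weight A t q (v, \<nu>2)))"
    by (simp only: sum_swap_triple[where X="nesting_rels (length w - Suc k)"]
      sum_swap_triple[where X="nesting_rels k"])
  also have "\<dots> = (\<Sum>r\<in>states A. \<Sum>s\<in>states A. \<Sum>t\<in>states A.
      (\<Sum>\<nu>1\<in>nesting_rels k. dcall A p a r * nw_weight A r s (u, \<nu>1)) *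
      (\<Sum>\<nu>2\<in>nesting_rels (length w - Suc k). dret A s p b t * nw_weight A t q (v, \<nu>2)))"
    by (simp only: sum_product)
  also have "\<dots> = (\<Sum>r\<in>states A. \<Sum>s\<in>states A. \<Sum>t\<in>states A. dcall A p a r * word_weight A r s u *
      (dret A s p b t * word_weight A t q v))"
    by (simp only: word_weight_def len sum_distrib_left)
  finally show ?thesis by (simp only: u_def b_def v_def)
qed

lemma word_weight_Cons:
  assumes fin: "finite (states A)" and p: "p \<in> states A"
  shows "word_weight A p q (a # w) = (\<Sum>r\<in>states A. dint A p a r * word_weight A r q w) +
    (\<Sum>r\<in>states A. \<Sum>s\<in>states A. \<Sum>t\<in>states A. dcall A p a r *
      (\<Sum>k<length w. word_weight A r s (take k w) * dret A s p (w ! k) t * word_weight A t q (drop (Suc k) w)))"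
proof -
  have "word_weight A p q (a # w) = (\<Sum>\<nu>\<in>nesting_rels (length w). nw_weight A p q (a # w, shift_arcs 1 \<nu>)) +
      (\<Sum>k<length w. \<Sum>\<nu>1\<in>nesting_rels k. \<Sum>\<nu>2\<in>nesting_rels (length w - Suc k).
        nw_weight A p q (a # w, enclose_arcs k \<nu>1 \<nu>2))"
    unfolding word_weight_def by (simp add: sum_nesting_rels_Suc)
  also have "\<dots> = (\<Sum>r\<in>states A. dint A p a r * word_weight A r q w) +
      (\<Sum>k<length w. \<Sum>r\<in>states A. \<Sum>s\<in>states A. \<Sum>t\<in>states A. dcall A p a r *
        word_weight A r s (take k w) * (dret A s p (w ! k) t * word_weight A t q (drop (Suc k) w)))"
    unfolding sum_nw_weight_shift_arcs[OF fin p] by (simp add: sum_nw_weight_enclose_arcs[OF fin p])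
  also have "(\<Sum>k<length w. \<Sum>r\<in>states A. \<Sum>s\<in>states A. \<Sum>t\<in>states A. dcall A p a r *
        word_weight A r s (take k w) * (dret A s p (w ! k) t * word_weight A t q (drop (Suc k) w))) =
      (\<Sum>r\<in>states A. \<Sum>s\<in>states A. \<Sum>t\<in>states A. dcall A p a r *
        (\<Sum>k<length w. word_weight A r s (take k w) * dret A s p (w ! k) t * word_weight A t q (drop (Suc k) w)))"
    by (simp only: sum_swap_triple[where X="{..<length w}"] sum_distrib_left mult.assoc)
  finally show ?thesis .
qed

section \<open>The algebraic system\<close>

definition poly_of_family ::
  "'i set \<Rightarrow> ('i \<Rightarrow> 'k::comm_monoid_add) \<Rightarrow> ('i \<Rightarrow> ('a + nat) list) \<Rightarrow> ('a + nat) list \<Rightarrow> 'k" where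
  "poly_of_family I c \<mu> m = (\<Sum>i\<in>I. if \<mu> i = m then c i else 0)"

definition poly_eval :: "(('a + nat) list \<Rightarrow> 'k::comm_semiring_1) \<Rightarrow> (nat \<Rightarrow> 'a list \<Rightarrow> 'k) \<Rightarrow> 'a list \<Rightarrow> 'k" where
  "poly_eval P S w = (\<Sum>m\<in>supp P. P m * eval_mon S m w)"

lemma poly_eval_superset:
  assumes "finite M" "supp P \<subseteq> M"
  shows "poly_eval P S w = (\<Sum>m\<in>M. P m * eval_mon S m w)"
  unfolding poly_eval_def by (rule sum.mono_neutral_left) (use assms in \<open>auto simp: supp_def\<close>)

lemma supp_poly_of_family: "supp (poly_of_family I c \<mu>) \<subseteq> \<mu> ` I"
proof
  fix m assume "m \<in> supp (poly_of_family I c \<mu>)"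
  then have "(\<Sum>i\<in>I. if \<mu> i = m then c i else 0) \<noteq> 0" by (simp add: supp_def poly_of_family_def)
  then obtain i where "i \<in> I" "(if \<mu> i = m then c i else 0) \<noteq> 0"
    using sum.not_neutral_contains_not_neutral by blast
  then show "m \<in> \<mu> ` I" by (auto split: if_splits)
qed

lemma poly_eval_poly_of_family:
  assumes "finite I"
  shows "poly_eval (poly_of_family I c \<mu>) S w = (\<Sum>i\<in>I. c i * eval_mon S (\<mu> i) w)"
proof -
  have "poly_eval (poly_of_family I c \<mu>) S w =
      (\<Sum>m\<in>\<mu> ` I. \<Sum>i\<in>I. if \<mu> i = m then c i * eval_mon S m w else 0)"
    unfolding poly_eval_superset[OF finite_imageI[OF assms] supp_poly_of_family]
    by (auto simp: poly_of_family_def sum_distrib_right intro!: sum.cong)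
  also have "\<dots> = (\<Sum>i\<in>I. c i * eval_mon S (\<mu> i) w)"
    using assms by (subst sum.swap) simp
  finally show ?thesis .
qed

lemma supp_add:
  fixes P P' :: "('a + nat) list \<Rightarrow> 'k::comm_monoid_add"
  shows "supp (\<lambda>m. P m + P' m) \<subseteq> supp P \<union> supp P'"
  unfolding supp_def by auto

lemma poly_eval_add:
  assumes "finite (supp P)" "finite (supp P')"
  shows "poly_eval (\<lambda>m. P m + P' m) S w = poly_eval P S w + poly_eval P' S w"
proof -
  have fin: "finite (supp P \<union> supp P')" using assms by simp
  show ?thesis
    unfolding poly_eval_superset[OF fin supp_add] poly_eval_superset[OF fin Un_upper1]
      poly_eval_superset[OF fin Un_upper2]
    by (simp add: distrib_right sum.distrib)
qed

lemma supp_sum: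
  fixes P :: "'i \<Rightarrow> ('a + nat) list \<Rightarrow> 'k::comm_semiring_1"
  shows "supp (\<lambda>m. \<Sum>i\<in>I. c i * P i m) \<subseteq> (\<Union>i\<in>I. supp (P i))"
proof
  fix m assume "m \<in> supp (\<lambda>m. \<Sum>i\<in>I. c i * P i m)"
  then have "(\<Sum>i\<in>I. c i * P i m) \<noteq> 0" by (simp add: supp_def)
  then obtain i where "i \<in> I" "c i * P i m \<noteq> 0"
    using sum.not_neutral_contains_not_neutral by blast
  then have "P i m \<noteq> 0" by auto
  with \<open>i \<in> I\<close> show "m \<in> (\<Union>i\<in>I. supp (P i))" by (auto simp: supp_def)
qed

lemma poly_eval_sum:
  assumes "finite I" "\<And>i. i \<in> I \<Longrightarrow> finite (supp (P i))"
  shows "poly_eval (\<lambda>m. \<Sum>i\<in>I. c i * P i m) S w = (\<Sum>i\<in>I. c i * poly_eval (P i) S w)"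
proof -
  let ?M = "\<Union>i\<in>I. supp (P i)"
  have "finite ?M" using assms by simp
  then have "poly_eval (\<lambda>m. \<Sum>i\<in>I. c i * P i m) S w =
      (\<Sum>m\<in>?M. (\<Sum>i\<in>I. c i * P i m) * eval_mon S m w)"
    by (rule poly_eval_superset[OF _ supp_sum])
  also have "\<dots> = (\<Sum>m\<in>?M. \<Sum>i\<in>I. c i * P i m * eval_mon S m w)"
    by (simp add: sum_distrib_right)
  also have "\<dots> = (\<Sum>i\<in>I. c i * (\<Sum>m\<in>?M. P i m * eval_mon S m w))"
    by (subst sum.swap) (simp add: sum_distrib_left mult.assoc)
  also have "\<dots> = (\<Sum>i\<in>I. c i * poly_eval (P i) S w)"
  proof (intro sum.cong refl)
    fix i assume "i \<in> I"
    have "poly_eval (P i) S w = (\<Sum>m\<in>?M. P i m * eval_mon S m w)"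
      by (rule poly_eval_superset[OF \<open>finite ?M\<close> UN_upper[OF \<open>i \<in> I\<close>]])
    then show "c i * (\<Sum>m\<in>?M. P i m * eval_mon S m w) = c i * poly_eval (P i) S w" by (simp only:)
  qed
  finally show ?thesis .
qed

definition pair_var :: "nat \<Rightarrow> nat \<Rightarrow> nat" where
  "pair_var r s = Suc (prod_encode (r, s))"

text \<open>The variable \<open>pair_var r s\<close> stands for the quasiregular part of \<open>word_weight A r s\<close>,
  so that \<open>word_weight A r s = [r = s] + pair_var r s\<close>. A flag \<open>h\<close> selects one of the two summands:
  the empty monomial with coefficient \<open>[r = s]\<close>, or the variable with coefficient 1
  (\<open>word_weight_eq_links\<close>).\<close>

definition opt_var :: "bool \<Rightarrow> nat \<Rightarrow> ('a + nat) list" where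
  "opt_var h X = (if h then [Inr X] else [])"

definition link_coeff :: "bool \<Rightarrow> nat \<Rightarrow> nat \<Rightarrow> 'k::comm_semiring_1" where
  "link_coeff h r s = (if h \<or> r = s then 1 else 0)"

definition pair_series :: "('a, 'k::comm_semiring_1) wnwa \<Rightarrow> nat \<Rightarrow> nat \<Rightarrow> 'a list \<Rightarrow> 'k" where
  "pair_series A r s w = (if w = [] then 0 else word_weight A r s w)"

definition solution :: "('a nested_word \<Rightarrow> 'k::comm_semiring_1) \<Rightarrow> ('a, 'k) wnwa \<Rightarrow> nat \<Rightarrow> 'a list \<Rightarrow> 'k" where
  "solution S A X = (if X = 0 then proj S else case prod_decode (X - 1) of (r, s) \<Rightarrow> pair_series A r s)"

lemma solution_pair_var [simp]: "solution S A (pair_var r s) = pair_series A r s"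
  by (simp add: solution_def pair_var_def)

lemma eval_mon_opt_var: "eval_mon T (opt_var h X) = (if h then T X else char_series [])"
  by (simp add: opt_var_def)

lemma eval_mon_opt_var_append:
  "eval_mon T (opt_var h X @ m) = cauchy_prod (eval_mon T (opt_var h X)) (eval_mon T m)"
  by (simp add: opt_var_def)

lemma word_weight_eq_links:
  assumes "r \<in> states A"
  shows "word_weight A r s u =
    (\<Sum>h\<in>UNIV. link_coeff h r s * eval_mon (solution S A) (opt_var h (pair_var r s)) u)"
  using word_weight_Nil[OF assms, of s]
  by (cases u) (simp_all add: UNIV_bool link_coeff_def eval_mon_opt_var pair_series_def char_series_def)

text \<open>The right-hand side of \<open>word_weight_Cons\<close>, with every \<open>word_weight A r s\<close> expanded into
  its two links.\<close>

definition pair_poly :: "('a, 'k::comm_semiring_1) wnwa \<Rightarrow> nat \<Rightarrow> nat \<Rightarrow> ('a + nat) list \<Rightarrow> 'k" where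
  "pair_poly A p q = (\<lambda>m.
     poly_of_family (states A \<times> UNIV \<times> UNIV)
       (\<lambda>(r, a, h). dint A p a r * link_coeff h r q)
       (\<lambda>(r, a, h). Inl a # opt_var h (pair_var r q)) m +
     poly_of_family (states A \<times> states A \<times> states A \<times> UNIV \<times> UNIV \<times> UNIV \<times> UNIV)
       (\<lambda>(r, s, t, a, b, h1, h2). dcall A p a r * dret A s p b t * (link_coeff h1 r s * link_coeff h2 t q))
       (\<lambda>(r, s, t, a, b, h1, h2). Inl a # opt_var h1 (pair_var r s) @ Inl b # opt_var h2 (pair_var t q)) m)"

lemma finite_supp_poly_of_family: "finite I \<Longrightarrow> finite (supp (poly_of_family I c \<mu>))"
  using supp_poly_of_family by (rule finite_subset) simp

lemma finite_supp_pair_poly: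
  fixes A :: "('a::finite, 'k::comm_semiring_1) wnwa"
  assumes "finite (states A)"
  shows "finite (supp (pair_poly A p q))"
  unfolding pair_poly_def
  by (rule finite_subset[OF supp_add]) (simp add: assms finite_supp_poly_of_family)

lemma eval_internal_monomials:
  fixes A :: "('a::finite, 'k::comm_semiring_1) wnwa"
  assumes r: "r \<in> states A"
  shows "(\<Sum>a\<in>UNIV. \<Sum>h\<in>UNIV. dint A p a r * link_coeff h r q *
      cauchy_prod (char_series [a]) (eval_mon (solution S A) (opt_var h (pair_var r q))) (x # w)) =
    dint A p x r * word_weight A r q w"
proof -
  let ?E = "\<lambda>h. eval_mon (solution S A) (opt_var h (pair_var r q))"
  have "(\<Sum>a\<in>UNIV. \<Sum>h\<in>UNIV. dint A p a r * link_coeff h r q * cauchy_prod (char_series [a]) (?E h) (x # w)) =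
      (\<Sum>a\<in>UNIV. if x = a then dint A p a r * (\<Sum>h\<in>UNIV. link_coeff h r q * ?E h w) else 0)"
  proof (intro sum.cong refl)
    fix a
    show "(\<Sum>h\<in>UNIV. dint A p a r * link_coeff h r q * cauchy_prod (char_series [a]) (?E h) (x # w)) =
        (if x = a then dint A p a r * (\<Sum>h\<in>UNIV. link_coeff h r q * ?E h w) else 0)"
      by (cases "x = a") (simp_all add: sum_distrib_left mult.assoc)
  qed
  also have "\<dots> = dint A p x r * word_weight A r q w"
    using word_weight_eq_links[OF r, of q w S] by simp
  finally show ?thesis .
qed

lemma eval_call_monomials:
  fixes A :: "('a::finite, 'k::comm_semiring_1) wnwa"
  assumes r: "r \<in> states A" and t: "t \<in> states A"
  shows "(\<Sum>a\<in>UNIV. \<Sum>b\<in>UNIV. \<Sum>h1\<in>UNIV. \<Sum>h2\<in>UNIV.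
      dcall A p a r * dret A s p b t * (link_coeff h1 r s * link_coeff h2 t q) *
      cauchy_prod (char_series [a]) (cauchy_prod (eval_mon (solution S A) (opt_var h1 (pair_var r s)))
        (cauchy_prod (char_series [b]) (eval_mon (solution S A) (opt_var h2 (pair_var t q))))) (x # w)) =
    dcall A p x r *
      (\<Sum>k<length w. word_weight A r s (take k w) * dret A s p (w ! k) t * word_weight A t q (drop (Suc k) w))"
proof -
  let ?E = "\<lambda>h r s. eval_mon (solution S A) (opt_var h (pair_var r s))"
  let ?F = "\<lambda>b. \<Sum>h1\<in>UNIV. \<Sum>h2\<in>UNIV. link_coeff h1 r s * link_coeff h2 t q *
    cauchy_prod (?E h1 r s) (cauchy_prod (char_series [b]) (?E h2 t q)) w"
  have "(\<Sum>a\<in>UNIV. \<Sum>b\<in>UNIV. \<Sum>h1\<in>UNIV. \<Sum>h2\<in>UNIV.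
      dcall A p a r * dret A s p b t * (link_coeff h1 r s * link_coeff h2 t q) *
      cauchy_prod (char_series [a]) (cauchy_prod (?E h1 r s) (cauchy_prod (char_series [b]) (?E h2 t q))) (x # w)) =
    (\<Sum>a\<in>UNIV. if x = a then dcall A p a r * (\<Sum>b\<in>UNIV. dret A s p b t * ?F b) else 0)"
  proof (intro sum.cong refl)
    fix a
    show "(\<Sum>b\<in>UNIV. \<Sum>h1\<in>UNIV. \<Sum>h2\<in>UNIV.
        dcall A p a r * dret A s p b t * (link_coeff h1 r s * link_coeff h2 t q) *
        cauchy_prod (char_series [a]) (cauchy_prod (?E h1 r s) (cauchy_prod (char_series [b]) (?E h2 t q))) (x # w)) =
      (if x = a then dcall A p a r * (\<Sum>b\<in>UNIV. dret A s p b t * ?F b) else 0)"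
      by (cases "x = a") (simp_all add: sum_distrib_left mult_ac)
  qed
  also have "\<dots> = dcall A p x r * (\<Sum>b\<in>UNIV. dret A s p b t *
      cauchy_prod (word_weight A r s) (cauchy_prod (char_series [b]) (word_weight A t q)) w)"
    unfolding word_weight_eq_links[OF r, of s _ S, abs_def] word_weight_eq_links[OF t, of q _ S, abs_def]
    by (simp add: cauchy_prod_sum_sum)
  also have "\<dots> = dcall A p x r *
      (\<Sum>k<length w. word_weight A r s (take k w) * dret A s p (w ! k) t * word_weight A t q (drop (Suc k) w))"
    by (simp add: sum_letters_cauchy_prod)
  finally show ?thesis .
qed

lemma poly_eval_pair_poly:
  fixes A :: "('a::finite, 'k::comm_semiring_1) wnwa"
  assumes fin: "finite (states A)" and p: "p \<in> states A"
  shows "poly_eval (pair_poly A p q) (solution S A) w = pair_series A p q w"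
proof -
  let ?E = "\<lambda>h r s. eval_mon (solution S A) (opt_var h (pair_var r s))"
  let ?internal = "\<lambda>w. \<Sum>r\<in>states A. \<Sum>a\<in>UNIV. \<Sum>h\<in>UNIV. dint A p a r * link_coeff h r q *
    cauchy_prod (char_series [a]) (?E h r q) w"
  let ?call = "\<lambda>w. \<Sum>r\<in>states A. \<Sum>s\<in>states A. \<Sum>t\<in>states A. \<Sum>a\<in>UNIV. \<Sum>b\<in>UNIV. \<Sum>h1\<in>UNIV. \<Sum>h2\<in>UNIV.
    dcall A p a r * dret A s p b t * (link_coeff h1 r s * link_coeff h2 t q) *
    cauchy_prod (char_series [a]) (cauchy_prod (?E h1 r s) (cauchy_prod (char_series [b]) (?E h2 t q))) w"
  have "poly_eval (pair_poly A p q) (solution S A) w = ?internal w + ?call w"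
    unfolding pair_poly_def
    by (simp add: poly_eval_add fin finite_supp_poly_of_family poly_eval_poly_of_family
        sum.cartesian_product' eval_mon_opt_var_append del: UNIV_Times_UNIV)
  also have "\<dots> = pair_series A p q w"
  proof (cases w)
    case (Cons x w')
    have "?internal (x # w') = (\<Sum>r\<in>states A. dint A p x r * word_weight A r q w')"
      by (rule sum.cong[OF refl], rule eval_internal_monomials)
    moreover have "?call (x # w') = (\<Sum>r\<in>states A. \<Sum>s\<in>states A. \<Sum>t\<in>states A. dcall A p x r *
        (\<Sum>k<length w'. word_weight A r s (take k w') * dret A s p (w' ! k) t * word_weight A t q (drop (Suc k) w')))"
      by (intro sum.cong refl) (rule eval_call_monomials; assumption)
    ultimately show ?thesis
      using Cons by (simp only: pair_series_def word_weight_Cons[OF fin p] list.distinct if_False)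
  qed (simp add: pair_series_def)
  finally show ?thesis .
qed

definition start_poly :: "('a, 'k::comm_semiring_1) wnwa \<Rightarrow> ('a + nat) list \<Rightarrow> 'k" where
  "start_poly A = (\<lambda>m. \<Sum>pq\<in>states A \<times> states A.
     init A (fst pq) * final A (snd pq) * pair_poly A (fst pq) (snd pq) m)"

definition system :: "('a, 'k::comm_semiring_1) wnwa \<Rightarrow> nat \<Rightarrow> ('a + nat) list \<Rightarrow> 'k" where
  "system A X = (if X = 0 then start_poly A else case prod_decode (X - 1) of (p, q) \<Rightarrow> pair_poly A p q)"

definition variables :: "('a, 'k) wnwa \<Rightarrow> nat set" where
  "variables A = insert 0 ((\<lambda>(r, s). pair_var r s) ` (states A \<times> states A))"

lemma system_pair_var [simp]: "system A (pair_var p q) = pair_poly A p q"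
  by (simp add: system_def pair_var_def)

lemma variablesE:
  assumes "X \<in> variables A"
  obtains "X = 0" | p q where "p \<in> states A" "q \<in> states A" "X = pair_var p q"
  using assms unfolding variables_def by auto

lemma variables_pair_poly:
  assumes "q \<in> states A" "m \<in> supp (pair_poly A p q)" "Inr Y \<in> set m"
  shows "Y \<in> variables A"
proof -
  from assms(2) have "m \<in> (\<lambda>(r, a, h). Inl a # opt_var h (pair_var r q)) ` (states A \<times> UNIV \<times> UNIV) \<union>
      (\<lambda>(r, s, t, a, b, h1, h2). Inl a # opt_var h1 (pair_var r s) @ Inl b # opt_var h2 (pair_var t q)) `
        (states A \<times> states A \<times> states A \<times> UNIV \<times> UNIV \<times> UNIV \<times> UNIV)"
    unfolding pair_poly_def
    by (rule subsetD[OF subset_trans[OF supp_add Un_mono[OF supp_poly_of_family supp_poly_of_family]]])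
  then show ?thesis
    using assms(1,3) by (auto simp: variables_def opt_var_def split: if_splits)
qed

lemma pair_poly_Nil: "pair_poly A p q [] = 0"
  and pair_poly_var: "pair_poly A p q [Inr Y] = 0"
  by (simp_all add: pair_poly_def poly_of_family_def split_def opt_var_def)

lemma proj_eq_sum_pair_series:
  assumes fin: "finite (states A)" and S: "\<forall>nw\<in>NW. S nw = behaviour A nw"
  shows "proj S w = (\<Sum>p\<in>states A. \<Sum>q\<in>states A. init A p * final A q * pair_series A p q w)"
proof (cases "w = []")
  case False
  have "proj S w = (\<Sum>\<nu>\<in>nesting_rels (length w). behaviour A (w, \<nu>))"
    using False S by (simp add: proj_def nesting_rels_def NW_def)
  also have "\<dots> = (\<Sum>p\<in>states A. \<Sum>q\<in>states A. init A p * final A q * word_weight A p q w)"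
    by (simp add: behaviour_eq_sum_nw_weight[OF fin] word_weight_def sum_distrib_left
        sum.swap[of _ "nesting_rels (length w)"] mult_ac)
  finally show ?thesis using False by (simp add: pair_series_def)
qed (simp add: proj_def pair_series_def)

lemma polynomial_over_system:
  fixes A :: "('a::finite, 'k::comm_semiring_1) wnwa"
  assumes fin: "finite (states A)" and X: "X \<in> variables A"
  shows "polynomial_over (variables A) (system A X)"
  using X
proof (cases rule: variablesE)
  case 1
  have supp: "supp (start_poly A) \<subseteq> (\<Union>pq\<in>states A \<times> states A. supp (pair_poly A (fst pq) (snd pq)))"
    unfolding start_poly_def by (rule supp_sum)
  have "Y \<in> variables A" if m: "m \<in> supp (start_poly A)" and Y: "Inr Y \<in> set m" for m Y
  proof -
    obtain pq where "pq \<in> states A \<times> states A" "m \<in> supp (pair_poly A (fst pq) (snd pq))"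
      using subsetD[OF supp m] by blast
    then show ?thesis using variables_pair_poly Y by auto
  qed
  moreover have "finite (supp (start_poly A))"
    by (rule finite_subset[OF supp]) (simp add: fin finite_supp_pair_poly)
  ultimately show ?thesis using 1 by (simp add: polynomial_over_def system_def)
qed (use fin finite_supp_pair_poly variables_pair_poly in \<open>auto simp: polynomial_over_def\<close>)

lemma proper_system_system: "proper_system (variables A) (system A)"
  unfolding proper_system_def
  by (auto simp: system_def start_poly_def pair_poly_Nil pair_poly_var split: prod.split)

lemma is_solution_system:
  fixes A :: "('a::finite, 'k::comm_semiring_1) wnwa"
  assumes fin: "finite (states A)" and S: "\<forall>nw\<in>NW. S nw = behaviour A nw"
  shows "is_solution (variables A) (system A) (solution S A)"
  unfolding is_solution_def poly_eval_def[symmetric]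
proof (intro ballI allI)
  fix X w assume "X \<in> variables A"
  then show "solution S A X w = poly_eval (system A X) (solution S A) w"
  proof (cases rule: variablesE)
    case 1
    have "poly_eval (start_poly A) (solution S A) w = (\<Sum>pq\<in>states A \<times> states A.
        init A (fst pq) * final A (snd pq) * poly_eval (pair_poly A (fst pq) (snd pq)) (solution S A) w)"
      unfolding start_poly_def using fin finite_supp_pair_poly[OF fin] by (simp add: poly_eval_sum)
    also have "\<dots> = proj S w"
      using fin by (simp add: poly_eval_pair_poly proj_eq_sum_pair_series[OF fin S] sum.cartesian_product')
    finally show ?thesis using 1 by (simp add: system_def solution_def)
  qed (simp add: poly_eval_pair_poly fin)
qed

lemma quasiregular_solution: "quasiregular (solution S A X)"
  by (simp add: quasiregular_def solution_def proj_def pair_series_def split: prod.split)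

theorem proposition6p3:
  fixes S :: "('a::finite) nested_word \<Rightarrow> 'k::comm_semiring_1"
  assumes "regular_nw S"
  shows "algebraic (proj S)"
proof -
  from assms obtain A where "wnwa_ok A" and S: "\<forall>nw\<in>NW. S nw = behaviour A nw"
    unfolding regular_nw_def by blast
  then have fin: "finite (states A)" by (simp add: wnwa_ok_def)
  have "solution S A 0 = proj S" by (simp add: solution_def)
  moreover have "finite (variables A)" "0 \<in> variables A"
    using fin by (simp_all add: variables_def)
  ultimately show ?thesis
    unfolding algebraic_def
    by (intro exI[of _ "variables A"] exI[of _ "system A"] exI[of _ 0] exI[of _ "solution S A"] conjI ballI)
      (simp_all add: polynomial_over_system[OF fin] proper_system_system is_solution_system[OF fin S]
        quasiregular_solution)
qed

end
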